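(* For every positive integer $r$, $$\sum_{n=1}^{\infty}\frac{1}{n(2n+2r-1)4^n}\frac{\binom{4n-2}{2n-1}}{\binom{2n+2r-2}{n+r-1}}=\frac{1}{(2r-1)\binom{2r-2}{r-1}}-\frac{1}{2^{2r-2}}I(r),$$ where $$I(r)=\frac{6\cdot 16^{r-1}}{r\binom{4r}{2r}}\left(\frac{4}{3}-\sqrt{2}\sum_{k=0}^{r-1} \frac{\binom{4k}{2k}}{(6k+3)16^k}\right).$$ *)

theory Defs
  imports Complex_Main
begin

definition I_r :: "nat \<Rightarrow> real" where
  "I_r r = 6 * 16 ^ (r - 1) / (real r * real ((4*r) choose (2*r))) *
     (4/3 - sqrt 2 * (\<Sum>k=0..r-1. real ((4*k) choose (2*k)) / ((6 * real k + 3) * 16 ^ k)))"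

end

theory Submission
  imports Defs "HOL-Analysis.Gamma_Function" "HOL-Real_Asymp.Real_Asymp"
begin

text \<open>
  Write \<open>c n = (2n choose n) / 4^n\<close>. For \<open>r = 1\<close> the series telescopes (Gosper). For general
  \<open>r\<close>, creative telescoping in the summation variable (Zeilberger) gives a first-order recurrence
  \<open>S r - \<mu> r * S (r + 1) = B r\<close>, where the boundary term \<open>B r\<close> involves the limit of the
  certificate; that limit is governed by \<open>c (2k + 1) / c (k + r) \<longlonglongrightarrow> 1 / sqrt 2\<close>, a consequence of
  Wallis' product in the form \<open>(2n + 1) * c n ^ 2 \<longlonglongrightarrow> 2 / pi\<close>; this is where \<open>sqrt 2\<close> comes from.
  The closed form satisfies the same recurrence, because its \<open>I(r)\<close>-part gets multiplied by exactly
  \<open>1 / \<mu> r\<close> when \<open>r\<close> increases, except for the new term of the finite sum.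
\<close>

definition cbinom :: "nat \<Rightarrow> real" where
  "cbinom n = real ((2*n) choose n) / 4^n"

lemma cbinom_0 [simp]: "cbinom 0 = 1"
  by (simp add: cbinom_def)

lemma cbinom_eq_fact: "cbinom n = fact (2*n) / (fact n ^ 2 * 4^n)"
  unfolding cbinom_def by (simp add: binomial_fact mult_2 power2_eq_square)

lemma cbinom_Suc: "cbinom (Suc n) = cbinom n * (2*real n+1) / (2*real n+2)"
proof -
  have "2 * Suc n = Suc (Suc (2*n))"
    by simp
  then have "(fact (2 * Suc n) :: real) = (2*real n+2) * (2*real n+1) * fact (2*n)"
    by (simp only: fact_Suc) (simp add: algebra_simps)
  then show ?thesis
    unfolding cbinom_eq_fact by (simp add: divide_simps; simp add: algebra_simps power2_eq_square)
qed

lemma cbinom_pos: "cbinom n > 0"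
  by (simp add: cbinom_def)

lemma binomial_eq_cbinom: "real ((2*n) choose n) = cbinom n * 4^n"
  by (simp add: cbinom_def)

lemma cbinom_wallis_prod: "(\<Prod>k=1..n. 4*real k^2 / (4*real k^2 - 1)) * ((2*real n+1) * cbinom n ^ 2) = 1"
proof (induction n)
  case (Suc n)
  define ratio where "ratio = (2*real n+1) * (2*real n+3) / (2*real n+2)^2"
  have "ratio > 0"
    by (simp add: ratio_def)
  have "(2*real (Suc n)+1) * cbinom (Suc n) ^ 2 = (2*real n+1) * cbinom n ^ 2 * ratio"
    by (simp add: ratio_def cbinom_Suc field_simps; simp add: power2_eq_square algebra_simps)
  moreover have "4*real (Suc n)^2 - 1 = (2*real n+1) * (2*real n+3)"
    by (simp add: power2_eq_square algebra_simps)
  then have "4*real (Suc n)^2 / (4*real (Suc n)^2 - 1) = 1 / ratio"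
    by (simp add: ratio_def power2_eq_square algebra_simps)
  ultimately show ?case
    using Suc.IH \<open>ratio > 0\<close> by (simp add: prod.nat_ivl_Suc')
qed simp

lemma tendsto_cbinom_wallis: "(\<lambda>n. (2*real n+1) * cbinom n ^ 2) \<longlonglongrightarrow> 2 / pi"
proof -
  have "(\<lambda>n. inverse (\<Prod>k=1..n. 4*real k^2 / (4*real k^2 - 1))) \<longlonglongrightarrow> inverse (pi / 2)"
    by (intro tendsto_inverse wallis) simp
  then show ?thesis
    using inverse_unique[OF cbinom_wallis_prod] by simp
qed

lemma tendsto_cbinom_ratio: "(\<lambda>k. cbinom (2*k+a) / cbinom (k+b)) \<longlonglongrightarrow> sqrt 2 / 2"
proof -
  define w where "w n = (2*real n+1) * cbinom n ^ 2" for n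
  have w: "w \<longlonglongrightarrow> 2 / pi"
    unfolding w_def by (rule tendsto_cbinom_wallis)
  have "strict_mono (\<lambda>k::nat. 2*k+a)"
    by (rule strict_monoI) simp
  then have w1: "(\<lambda>k. w (2*k+a)) \<longlonglongrightarrow> 2 / pi"
    using LIMSEQ_subseq_LIMSEQ[OF w] by (simp add: o_def)
  have w2: "(\<lambda>k. w (k+b)) \<longlonglongrightarrow> 2 / pi"
    using LIMSEQ_ignore_initial_segment[OF w] .
  have lin: "(\<lambda>k. (2*real (k+b)+1) / (2*real (2*k+a)+1)) \<longlonglongrightarrow> 1/2"
    by real_asymp
  have eq: "w m / w n * ((2*real n+1) / (2*real m+1)) = (cbinom m / cbinom n)^2" for m n
    unfolding w_def by (simp add: power_divide)
  have "(\<lambda>k. w (2*k+a) / w (k+b) * ((2*real (k+b)+1) / (2*real (2*k+a)+1)))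
          \<longlonglongrightarrow> (2/pi) / (2/pi) * (1/2)"
    by (intro tendsto_mult tendsto_divide w1 w2 lin) simp
  then have "(\<lambda>k. (cbinom (2*k+a) / cbinom (k+b))^2) \<longlonglongrightarrow> 1/2"
    by (simp only: eq) simp
  from tendsto_real_sqrt[OF this] have "(\<lambda>k. cbinom (2*k+a) / cbinom (k+b)) \<longlonglongrightarrow> sqrt (1/2)"
    using cbinom_pos by (simp add: abs_of_pos)
  moreover have "sqrt (1/2) = sqrt 2 / 2"
    by (simp add: real_sqrt_divide divide_simps)
  ultimately show ?thesis
    by simp
qed

definition series_term :: "nat \<Rightarrow> nat \<Rightarrow> real" where
  "series_term r n = 1 / (real n * (2 * real n + 2 * real r - 1) * 4 ^ n) *
     (real ((4*n - 2) choose (2*n - 1)) / real ((2*n + 2*r - 2) choose (n + r - 1)))"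

text \<open>Indices are shifted, \<open>r = q + 1\<close> and \<open>n = k + 1\<close>, so that the truncated subtractions in
  \<open>series_term\<close> disappear; \<open>rho\<close> is the hypergeometric factor shared by the summand and
  the certificates.\<close>

definition rho :: "nat \<Rightarrow> nat \<Rightarrow> real" where
  "rho q k = cbinom (2*k+1) / (4^q * cbinom (k+q+1))"

lemma rho_pos: "rho q k > 0"
  by (simp add: rho_def cbinom_pos)

lemma series_term_eq_rho:
  "series_term (Suc q) (Suc k) = rho q k / (4 * (real k+1) * (2*real k+2*real q+3))"
proof -
  have "4 * Suc k - 2 = 2*(2*k+1)" "2 * Suc k - 1 = 2*k+1"
    "2 * Suc k + 2 * Suc q - 2 = 2*(k+q+1)" "Suc k + Suc q - 1 = k+q+1"
    by simp_all
  moreover have "(4::real) ^ (2*k+1) = 4 * 4^k * 4^k" "(4::real) ^ (k+q+1) = 4 * 4^k * 4^q"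
    "(4::real) ^ Suc k = 4 * 4^k"
    by (simp_all add: power_add mult_2)
  moreover have "2 * real (Suc k) + 2 * real (Suc q) - 1 = 2*real k+2*real q+3"
    by simp
  ultimately show ?thesis
    unfolding series_term_def rho_def
    by (simp only: binomial_eq_cbinom) (simp add: divide_simps cbinom_pos; simp add: algebra_simps)
qed

lemma rho_Suc_right:
  "rho q (Suc k) = rho q k * ((4*real k+3) * (4*real k+5) * (2*real k+2*real q+4))
                     / ((4*real k+4) * (4*real k+6) * (2*real k+2*real q+3))"
proof -
  have "2 * Suc k + 1 = Suc (Suc (2*k+1))" "Suc k + q + 1 = Suc (k+q+1)"
    by simp_all
  then show ?thesis
    unfolding rho_def
    by (simp only: cbinom_Suc) (simp add: divide_simps cbinom_pos; simp add: algebra_simps)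
qed

lemma rho_Suc_left:
  "rho (Suc q) k = rho q k * (2*real k+2*real q+4) / (4 * (2*real k+2*real q+3))"
proof -
  have "k + Suc q + 1 = Suc (k+q+1)"
    by simp
  then show ?thesis
    unfolding rho_def
    by (simp only: cbinom_Suc) (simp add: divide_simps cbinom_pos; simp add: algebra_simps)
qed

lemma tendsto_rho: "rho q \<longlonglongrightarrow> sqrt 2 / (2 * 4^q)"
proof -
  have "(\<lambda>k. cbinom (2*k+1) / cbinom (k+(q+1)) / 4^q) \<longlonglongrightarrow> sqrt 2 / 2 / 4^q"
    by (intro tendsto_divide tendsto_cbinom_ratio tendsto_const) simp
  then show ?thesis
    by (simp add: rho_def[abs_def] field_simps add.assoc)
qed

text \<open>Gosper's certificate for \<open>r = 1\<close>.\<close>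

definition base_cert :: "nat \<Rightarrow> real" where
  "base_cert k = (2*real k+1) / (3*real k+3) * rho 0 k"

lemma series_term_one_telescoping: "series_term 1 (Suc k) = base_cert (Suc k) - base_cert k"
  unfolding base_cert_def One_nat_def series_term_eq_rho rho_Suc_right
  using rho_pos[of 0 k] by (simp add: divide_simps; simp add: algebra_simps)

lemma sums_series_term_one: "(\<lambda>k. series_term 1 (Suc k)) sums (sqrt 2 / 3 - 1 / 3)"
proof -
  have "(\<lambda>k. (2*real k+1) / (3*real k+3)) \<longlonglongrightarrow> 2/3"
    by real_asymp
  then have "base_cert \<longlonglongrightarrow> 2/3 * (sqrt 2 / 2)"
    unfolding base_cert_def[abs_def] using tendsto_rho[of 0] by (intro tendsto_mult) simp_all
  then have "(\<lambda>k. base_cert (Suc k) - base_cert k) sums (2/3 * (sqrt 2 / 2) - base_cert 0)"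
    by (rule telescope_sums)
  moreover have "base_cert 0 = 1/3"
    using cbinom_pos[of 1] by (simp add: base_cert_def rho_def)
  ultimately show ?thesis
    unfolding series_term_one_telescoping by simp
qed

text \<open>Coefficient and certificate of the recurrence in \<open>r\<close> found by Zeilberger's algorithm.\<close>

definition recurrence_coeff :: "nat \<Rightarrow> real" where
  "recurrence_coeff q = (4*real q+5) * (4*real q+7) / ((2*real q+2) * (2*real q+3))"

definition recurrence_cert :: "nat \<Rightarrow> nat \<Rightarrow> real" where
  "recurrence_cert q k = - (2*real k+1) / (2*real k+2*real q+3) * rho q k / (4 * (real q+1) * (2*real q+3))"

lemma series_term_recurrence:
  "series_term (Suc q) (Suc k) - recurrence_coeff q * series_term (Suc (Suc q)) (Suc k)
     = recurrence_cert q (Suc k) - recurrence_cert q k"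
  unfolding series_term_eq_rho recurrence_coeff_def recurrence_cert_def rho_Suc_left rho_Suc_right
  using rho_pos[of q k] by (simp add: divide_simps; simp add: algebra_simps)

lemma tendsto_recurrence_cert:
  "recurrence_cert q \<longlonglongrightarrow> - sqrt 2 / (8 * 4^q * (real q+1) * (2*real q+3))"
proof -
  have lim: "(\<lambda>k. - (2*real k+1) / (2*real k+2*real q+3)) \<longlonglongrightarrow> -1"
    by real_asymp
  have "-1 * (sqrt 2 / (2 * 4^q)) / (4 * (real q+1) * (2*real q+3))
      = - sqrt 2 / (8 * 4^q * (real q+1) * (2*real q+3))"
    by (simp add: divide_simps; simp add: algebra_simps)
  moreover have "recurrence_cert q \<longlonglongrightarrow> -1 * (sqrt 2 / (2 * 4^q)) / (4 * (real q+1) * (2*real q+3))"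
    unfolding recurrence_cert_def[abs_def]
    by (intro tendsto_divide tendsto_mult lim tendsto_rho tendsto_const) simp
  ultimately show ?thesis
    by (simp only:)
qed

lemma sums_series_term_recurrence:
  "(\<lambda>k. series_term (Suc q) (Suc k) - recurrence_coeff q * series_term (Suc (Suc q)) (Suc k))
     sums ((1 / (cbinom (Suc q) * (2*real q+3)) - sqrt 2) / (8 * 4^q * (real q+1) * (2*real q+3)))"
proof -
  have "- sqrt 2 / (8 * 4^q * (real q+1) * (2*real q+3)) - recurrence_cert q 0
      = (1 / (cbinom (Suc q) * (2*real q+3)) - sqrt 2) / (8 * 4^q * (real q+1) * (2*real q+3))"
    using cbinom_pos[of "Suc q"]
    by (simp add: recurrence_cert_def rho_def cbinom_Suc[of 0] divide_simps; simp add: algebra_simps)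
  then show ?thesis
    using telescope_sums[OF tendsto_recurrence_cert[of q]] unfolding series_term_recurrence
    by simp
qed

definition series_value :: "nat \<Rightarrow> real" where
  "series_value r = 1 / ((2 * real r - 1) * real ((2*r - 2) choose (r - 1))) - 1 / 2 ^ (2*r - 2) * I_r r"

lemma I_r_Suc:
  "I_r (Suc q) = 3 / (8 * (real q+1) * cbinom (2*q+2))
                   * (4/3 - sqrt 2 * (\<Sum>k\<le>q. cbinom (2*k) / (6*real k+3)))"
proof -
  have "real ((4*k) choose (2*k)) / ((6 * real k + 3) * 16 ^ k) = cbinom (2*k) / (6*real k+3)" for k
  proof -
    have "4*k = 2*(2*k)" "(16::real) ^ k = 4 ^ (2*k)"
      by (simp_all add: power_mult)
    then show ?thesis
      by (simp only: binomial_eq_cbinom) (simp add: cbinom_pos)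
  qed
  moreover have "real ((4 * Suc q) choose (2 * Suc q)) = cbinom (2*q+2) * 16^q * 16"
  proof -
    have "4 * Suc q = 2*(2*q+2)" "2 * Suc q = 2*q+2" "(4::real) ^ (2*q+2) = 16^q * 16"
      by (simp_all add: power_add power_mult)
    then show ?thesis
      by (simp only: binomial_eq_cbinom)
  qed
  ultimately show ?thesis
    unfolding I_r_def using cbinom_pos[of "2*q+2"]
    by (simp add: atLeast0AtMost divide_simps)
qed

lemma series_value_Suc:
  "series_value (Suc q) = 1 / ((2*real q+2) * cbinom (Suc q) * 4^q)
     - 3 / (8 * (real q+1) * cbinom (2*q+2) * 4^q) * (4/3 - sqrt 2 * (\<Sum>k\<le>q. cbinom (2*k) / (6*real k+3)))"
proof -
  have "2 * Suc q - 2 = 2*q" "Suc q - 1 = q" "(2::real) ^ (2*q) = 4^q"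
    by (simp_all add: power_mult)
  then have "series_value (Suc q) = 1 / ((2*real q+1) * cbinom q * 4^q) - I_r (Suc q) / 4^q"
    unfolding series_value_def by (simp only: binomial_eq_cbinom) (simp add: algebra_simps)
  then show ?thesis
    unfolding I_r_Suc cbinom_Suc[of q] using cbinom_pos[of q]
    by (simp add: divide_simps)
qed

lemma series_value_one: "series_value 1 = sqrt 2 / 3 - 1 / 3"
  using series_value_Suc[of 0] by (simp add: cbinom_Suc)

lemma series_value_recurrence:
  "series_value (Suc q) - recurrence_coeff q * series_value (Suc (Suc q))
     = (1 / (cbinom (Suc q) * (2*real q+3)) - sqrt 2) / (8 * 4^q * (real q+1) * (2*real q+3))"
proof -
  define a where "a r = 1 / ((2*real r+2) * cbinom (Suc r) * 4^r)" for r
  define b where "b r = 3 / (8 * (real r+1) * cbinom (2*r+2) * 4^r)" for r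
  define T where "T r = (\<Sum>k\<le>r. cbinom (2*k) / (6*real k+3))" for r
  define t where "t = cbinom (2*q+2) / (6*real q+9)"
  have series_value_ab: "series_value (Suc r) = a r - b r * (4/3 - sqrt 2 * T r)" for r
    unfolding a_def b_def T_def by (rule series_value_Suc)
  have "T (Suc q) = T q + t"
    by (simp add: T_def t_def)
  moreover have "2 * Suc q + 2 = Suc (Suc (2*q+2))"
    by simp
  \<comment> \<open>so the \<open>4/3\<close>-parts cancel and of the sum only its new term \<open>t\<close> survives\<close>
  then have "b q = recurrence_coeff q * b (Suc q)"
    unfolding b_def recurrence_coeff_def using cbinom_pos[of "2*q+2"]
    by (simp only: cbinom_Suc) (simp add: divide_simps; simp add: algebra_simps)
  ultimately have "series_value (Suc q) - recurrence_coeff q * series_value (Suc (Suc q))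
      = a q - recurrence_coeff q * a (Suc q) - b q * sqrt 2 * t"
    unfolding series_value_ab by (simp add: algebra_simps)
  also have "a q - recurrence_coeff q * a (Suc q) = 1 / (8 * 4^q * cbinom (Suc q) * (real q+1) * (2*real q+3)^2)"
    unfolding a_def recurrence_coeff_def cbinom_Suc[of "Suc q"] using cbinom_pos[of "Suc q"]
    by (simp add: divide_simps; simp add: algebra_simps power2_eq_square)
  also have "b q * sqrt 2 * t = sqrt 2 / (8 * 4^q * (real q+1) * (2*real q+3))"
    unfolding b_def t_def using cbinom_pos[of "2*q+2"]
    by (simp add: divide_simps; simp add: algebra_simps)
  also have "1 / (8 * 4^q * cbinom (Suc q) * (real q+1) * (2*real q+3)^2) - sqrt 2 / (8 * 4^q * (real q+1) * (2*real q+3))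
      = (1 / (cbinom (Suc q) * (2*real q+3)) - sqrt 2) / (8 * 4^q * (real q+1) * (2*real q+3))"
    using cbinom_pos[of "Suc q"] by (simp add: divide_simps; simp add: algebra_simps power2_eq_square)
  finally show ?thesis .
qed

lemma sums_series_term: "(\<lambda>k. series_term (Suc q) (Suc k)) sums series_value (Suc q)"
proof (induction q)
  case 0
  show ?case
    using sums_series_term_one series_value_one by simp
next
  case (Suc q)
  let ?\<mu> = "recurrence_coeff q"
  have "(\<lambda>k. series_term (Suc q) (Suc k)
              - (series_term (Suc q) (Suc k) - ?\<mu> * series_term (Suc (Suc q)) (Suc k)))
          sums (series_value (Suc q) - (series_value (Suc q) - ?\<mu> * series_value (Suc (Suc q))))"
    unfolding series_value_recurrence
    by (rule sums_diff[OF Suc.IH sums_series_term_recurrence])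
  then have "(\<lambda>k. ?\<mu> * series_term (Suc (Suc q)) (Suc k)) sums (?\<mu> * series_value (Suc (Suc q)))"
    by simp
  moreover have "?\<mu> \<noteq> 0"
    by (simp add: recurrence_coeff_def)
  ultimately show ?case
    by (simp add: sums_mult_iff)
qed

theorem theorem4p0p2:
  fixes r :: nat
  assumes "r \<ge> 1"
  shows "(\<lambda>m. let n = m + 1 in
            1 / (real n * (2 * real n + 2 * real r - 1) * 4 ^ n) *
            (real ((4*n - 2) choose (2*n - 1)) / real ((2*n + 2*r - 2) choose (n + r - 1))))
         sums (1 / ((2 * real r - 1) * real ((2*r - 2) choose (r - 1))) - 1 / 2 ^ (2*r - 2) * I_r r)"
proof -
  obtain q where "r = Suc q"
    using assms by (cases r) auto
  then show ?thesis
    using sums_series_term[of q] unfolding series_term_def series_value_def Let_def by simp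
qed

end
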